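(* There is an absolute constant $C>0$ such that for every reduced integer $n\ge3$, $$\left|\Omega(n)-\frac{\log n}{\log\log n}\right|\le C\,\frac{\log n}{(\log\log n)^2}.$$
   Context: $\Omega(n)$ is the number of prime factors of $n$ counted with multiplicity. Let $p_i$ denote the $i$-th prime ($p_1=2$). A positive integer $\prod_i p_i^{a_i}$ (with $a_i=0$ for all sufficiently large $i$) is called reduced if $\left\lfloor\frac{a_i+1}{a_j+2}\right\rfloor<\frac{\log p_j}{\log p_i}$ for all $i,j\ne 1$, and $2^{a_1}<8p_j^2$ for every $j$ with $a_j=0$. *)

theory Defs
  imports "HOL-Analysis.Analysis" "HOL-Computational_Algebra.Primes"
begin

definition bigOmega :: "nat \<Rightarrow> nat" where
  "bigOmega n = size (prime_factorization n)"

text \<open>Writing n = prod p_i^(a_i), a_i is the multiplicity of the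
  i-th prime in n. Indices i, j different from 1 correspond to odd primes p, q;
  the second condition ranges over all primes q not dividing n.\<close>
definition reduced :: "nat \<Rightarrow> bool" where
  "reduced n \<longleftrightarrow> n > 0 \<and>
     (\<forall>p q. prime p \<and> prime q \<and> p \<noteq> 2 \<and> q \<noteq> 2 \<longrightarrow>
        real_of_int \<lfloor>real (multiplicity p n + 1) / real (multiplicity q n + 2)\<rfloor>
          < ln (real q) / ln (real p)) \<and>
     (\<forall>q. prime q \<and> multiplicity q n = 0 \<longrightarrow>
        (2::nat) ^ multiplicity 2 n < 8 * q^2)"

end

theory Submission
  imports Defs "HOL-Real_Asymp.Real_Asymp"
begin

(* Let q be the least odd prime not dividing the reduced number n = \<Prod> p^a_p. The two
   reducedness conditions (applied with a_q = 0) force every prime factor of n to lie below q,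
   every odd prime below q to divide n, and a_p ln p \<le> 2 ln q + 3 for all p. Hence
   \<theta>(q - 1) - ln 2 \<le> ln n \<le> \<pi>(q) (2 ln q + 3), so by Chebyshev's estimates ln n is of
   order q and ln ln n = ln q + O(1). Moreover \<Omega>(n) ln q = ln n + \<Sum>_p a_p ln (q/p), and this
   excess is O(q / ln q): primes above \<surd>q have bounded exponent and \<Sum>_{p<q} ln (q/p) = O(q / ln q),
   while each of the at most \<surd>q smaller primes contributes O(ln\<^sup>2 q). Dividing by ln q
   gives the claim when q is large; when q is bounded, so is n. *)

section \<open>Chebyshev's estimates\<close>

definition chebyshev_theta :: "nat \<Rightarrow> real" where
  "chebyshev_theta x = (\<Sum>p | prime p \<and> p \<le> x. ln (real p))"

definition prime_pi :: "nat \<Rightarrow> nat" where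
  "prime_pi x = card {p. prime p \<and> p \<le> x}"

lemma ln_prime_gt_0: "prime p \<Longrightarrow> 0 < ln (real p)"
  using prime_gt_1_nat[of p] by simp

lemma ln_eq_sum_multiplicity:
  assumes "n > 0"
  shows "ln (real n) = (\<Sum>p\<in>prime_factors n. real (multiplicity p n) * ln (real p))"
proof -
  have "real n = real (\<Prod>p\<in>prime_factors n. p ^ multiplicity p n)"
    using prime_factorization_nat[OF assms] by simp
  then have "ln (real n) = ln (\<Prod>p\<in>prime_factors n. real p ^ multiplicity p n)"
    by simp
  also have "\<dots> = (\<Sum>p\<in>prime_factors n. real (multiplicity p n) * ln (real p))"
    by (subst ln_prod) (auto simp: ln_realpow prime_gt_0_nat dest: in_prime_factors_imp_prime)
  finally show ?thesis .
qed

lemma sum_ln_prime_divisors_le: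
  assumes "n > 0" "\<And>p. p \<in> A \<Longrightarrow> prime p \<and> p dvd n"
  shows "(\<Sum>p\<in>A. ln (real p)) \<le> ln (real n)"
proof -
  have A: "A \<subseteq> prime_factors n"
    using assms by (auto intro: prime_factorsI)
  have "(\<Sum>p\<in>A. ln (real p)) \<le> (\<Sum>p\<in>A. real (multiplicity p n) * ln (real p))"
  proof (rule sum_mono)
    fix p assume "p \<in> A"
    then have "prime p" "1 \<le> multiplicity p n"
      using assms by (auto simp: Suc_le_eq prime_multiplicity_gt_zero_iff)
    then show "ln (real p) \<le> real (multiplicity p n) * ln (real p)"
      using ln_prime_gt_0[of p] mult_right_mono[of 1 "real (multiplicity p n)" "ln (real p)"]
      by simp
  qed
  also have "\<dots> \<le> (\<Sum>p\<in>prime_factors n. real (multiplicity p n) * ln (real p))"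
    using A by (intro sum_mono2)
      (auto intro!: mult_nonneg_nonneg less_imp_le[OF ln_prime_gt_0] dest: in_prime_factors_imp_prime)
  also have "\<dots> = ln (real n)"
    using ln_eq_sum_multiplicity[OF assms(1)] by simp
  finally show ?thesis .
qed

lemma chebyshev_theta_mono: "x \<le> y \<Longrightarrow> chebyshev_theta x \<le> chebyshev_theta y"
  unfolding chebyshev_theta_def
  by (rule sum_mono2) (auto intro: less_imp_le ln_prime_gt_0)

lemma prime_dvd_binomial_middle:
  assumes p: "prime p" "m + 1 < p" "p \<le> 2 * m + 1"
  shows "p dvd (2 * m + 1 choose m)"
proof -
  have "fact (2 * m + 1) = (fact m * fact (m + 1) * (2 * m + 1 choose m) :: nat)"
    using binomial_fact_lemma[of m "2 * m + 1"] by (simp add: ac_simps del: fact_Suc)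
  moreover have "p dvd fact (2 * m + 1)" "\<not> p dvd fact m" "\<not> p dvd fact (m + 1)"
    by (subst prime_dvd_fact_iff[OF p(1)], use p in simp)+
  ultimately show ?thesis
    by (simp only: prime_dvd_mult_iff[OF p(1)]) blast
qed

lemma binomial_middle_le_power_4: "(2 * m + 1 choose m) \<le> 4 ^ m"
proof -
  have "(2 * m + 1 choose m) \<le> (\<Sum>k\<le>m. 2 * m + 1 choose k)"
    by (rule member_le_sum) auto
  also have "\<dots> = 4 ^ m"
    using binomial_r_part_sum[of m] by (simp add: power_mult)
  finally show ?thesis .
qed

text \<open>The primes in \<open>(m + 1, 2m + 1]\<close> all divide \<open>2m + 1 choose m \<le> 4\<^sup>m\<close>.\<close>
lemma chebyshev_theta_odd_le: "chebyshev_theta (2 * m + 1) \<le> chebyshev_theta (m + 1) + real m * ln 4"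
proof -
  define A where "A = {p. prime p \<and> m + 1 < p \<and> p \<le> 2 * m + 1}"
  have split: "{p. prime p \<and> p \<le> 2 * m + 1} = {p. prime p \<and> p \<le> m + 1} \<union> A"
    by (auto simp: A_def)
  have "chebyshev_theta (2 * m + 1) = chebyshev_theta (m + 1) + (\<Sum>p\<in>A. ln (real p))"
    unfolding chebyshev_theta_def by (simp only: split) (rule sum.union_disjoint; auto simp: A_def)
  also have "(\<Sum>p\<in>A. ln (real p)) \<le> ln (real (2 * m + 1 choose m))"
    using prime_dvd_binomial_middle[of _ m] by (intro sum_ln_prime_divisors_le) (auto simp: A_def)
  also have "\<dots> \<le> ln (4 ^ m)"
    using binomial_middle_le_power_4[of m] by (subst ln_le_cancel_iff) (auto simp flip: of_nat_le_iff)
  finally show ?thesis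
    by (simp add: ln_realpow)
qed

lemma chebyshev_theta_le: "chebyshev_theta x \<le> real x * ln 4"
proof (induction x rule: less_induct)
  case (less x)
  have "x \<le> 2 \<or> (2 < x \<and> even x) \<or> (\<exists>m. x = 2 * m + 1 \<and> 1 \<le> m)"
    by presburger
  then consider "x \<le> 2" | "2 < x" "even x" | m where "x = 2 * m + 1" "1 \<le> m"
    by blast
  then show ?case
  proof cases
    case 1
    then have "{p. prime p \<and> p \<le> x} \<subseteq> {2}"
      by (auto dest: prime_ge_2_nat)
    then have "chebyshev_theta x \<le> (\<Sum>p\<in>{2}. ln (real p))"
      unfolding chebyshev_theta_def by (intro sum_mono2) auto
    moreover have "x < 2 \<Longrightarrow> chebyshev_theta x = 0"
      unfolding chebyshev_theta_def by (auto intro!: sum.neutral dest: prime_ge_2_nat)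
    moreover have "ln 2 \<le> 2 * ln (4::real)"
      using ln_le_cancel_iff[of 2 4] ln_ge_zero[of 4] by linarith
    ultimately show ?thesis
      using 1 by (cases "x = 2") auto
  next
    case 2
    then have "\<not> prime x"
      using prime_odd_nat by auto
    then have "prime p \<and> p \<le> x \<longleftrightarrow> prime p \<and> p \<le> x - 1" for p
      by (cases "p = x") auto
    then have "chebyshev_theta x = chebyshev_theta (x - 1)"
      by (simp add: chebyshev_theta_def)
    also have "\<dots> \<le> real (x - 1) * ln 4"
      using less[of "x - 1"] 2 by simp
    also have "\<dots> \<le> real x * ln 4"
      by (intro mult_right_mono) auto
    finally show ?thesis .
  next
    case 3
    then have "chebyshev_theta x \<le> chebyshev_theta (m + 1) + real m * ln 4"
      using chebyshev_theta_odd_le by simp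
    also have "chebyshev_theta (m + 1) \<le> real (m + 1) * ln 4"
      using less[of "m + 1"] 3 by simp
    finally show ?thesis
      using 3 by (simp add: algebra_simps)
  qed
qed

lemma card_square_bounded_le_sqrt:
  assumes "0 \<notin> A"
  shows "real (card (A \<inter> {p. p * p \<le> x})) \<le> sqrt (real x)"
proof -
  define s where "s = nat \<lfloor>sqrt (real x)\<rfloor>"
  have "A \<inter> {p. p * p \<le> x} \<subseteq> {1..s}"
  proof
    fix p assume p: "p \<in> A \<inter> {p. p * p \<le> x}"
    then have "(real p)\<^sup>2 \<le> real x"
      by (simp add: power2_eq_square flip: of_nat_mult)
    then have "p \<le> s"
      unfolding s_def by (simp add: le_nat_floor real_le_rsqrt)
    moreover have "p \<noteq> 0"
      using p assms by (metis IntD1)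
    ultimately show "p \<in> {1..s}"
      by simp
  qed
  then have "real (card (A \<inter> {p. p * p \<le> x})) \<le> real (card {1..s})"
    by (intro of_nat_mono card_mono) auto
  also have "\<dots> \<le> sqrt (real x)"
    unfolding s_def by simp
  finally show ?thesis .
qed

lemma sqrt_mult_ln_le:
  assumes "0 < x"
  shows "sqrt x * ln x \<le> 2 * x"
proof -
  have "ln x \<le> 2 * sqrt x"
    using ln_le_minus_one[of "sqrt x"] ln_sqrt[of x] assms by simp
  then have "sqrt x * ln x \<le> sqrt x * (2 * sqrt x)"
    using assms by (intro mult_left_mono) auto
  also have "\<dots> = 2 * x"
    using assms by (simp add: algebra_simps)
  finally show ?thesis .
qed

lemma prime_pi_mult_ln_le: "real (prime_pi x) * ln (real x) \<le> 8 * real x"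
proof (cases "x \<le> 1")
  case True
  then have "prime_pi x = 0"
    unfolding prime_pi_def by (auto dest: prime_ge_2_nat)
  then show ?thesis by simp
next
  case False
  define P where "P = {p. prime p \<and> p \<le> x}"
  define Small where "Small = P \<inter> {p. p * p \<le> x}"
  have "finite P"
    by (simp add: P_def)
  have "real (prime_pi x) * ln x = (\<Sum>p\<in>P. ln x)"
    by (simp add: prime_pi_def P_def)
  also have "\<dots> = (\<Sum>p\<in>P - Small. ln x) + (\<Sum>p\<in>Small. ln x)"
    using \<open>finite P\<close> by (intro sum.subset_diff) (auto simp: Small_def)
  also have "(\<Sum>p\<in>Small. ln (real x)) \<le> sqrt x * ln x"
  proof -
    have "real (card Small) \<le> sqrt x"
      unfolding Small_def by (rule card_square_bounded_le_sqrt) (simp add: P_def)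
    then show ?thesis
      using False by (simp add: mult_right_mono)
  qed
  also have "\<dots> \<le> 2 * real x"
    using False by (intro sqrt_mult_ln_le) simp
  also have "(\<Sum>p\<in>P - Small. ln (real x)) \<le> (\<Sum>p\<in>P - Small. 2 * ln (real p))"
  proof (rule sum_mono)
    fix p assume "p \<in> P - Small"
    then have "prime p" "real x < real p ^ 2"
      by (auto simp: P_def Small_def power2_eq_square simp flip: of_nat_mult)
    then have "ln (real x) < ln (real p ^ 2)"
      using False by (subst ln_less_cancel_iff) auto
    then show "ln (real x) \<le> 2 * ln (real p)"
      using \<open>prime p\<close> by (simp add: ln_realpow prime_gt_0_nat)
  qed
  also have "\<dots> \<le> 2 * chebyshev_theta x"
    unfolding chebyshev_theta_def P_def[symmetric] sum_distrib_left[symmetric] using \<open>finite P\<close>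
    by (intro mult_left_mono sum_mono2) (auto simp: P_def intro: less_imp_le ln_prime_gt_0)
  also have "\<dots> \<le> 2 * (3 * x)"
    using chebyshev_theta_le[of x] ln_le_minus_one[of 4] mult_left_mono[of "ln 4" 3 "real x"]
    by (simp add: mult.commute)
  finally show ?thesis by simp
qed

lemma multiplicity_fact:
  assumes p: "prime p"
  shows "n \<le> N \<Longrightarrow> multiplicity p (fact n) = (\<Sum>k\<in>{1..N}. n div p ^ k)"
proof (induction n)
  case 0
  then show ?case by simp
next
  case (Suc n)
  have p1: "Suc 0 < p"
    using p prime_gt_1_nat by simp
  have "multiplicity p (Suc n) < p ^ multiplicity p (Suc n)"
    by (rule power_gt_expt[OF p1])
  also have "\<dots> \<le> Suc n"
    by (intro dvd_imp_le multiplicity_dvd) simp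
  finally have "multiplicity p (Suc n) \<le> N"
    using Suc.prems by simp
  moreover have "p ^ k dvd Suc n \<longleftrightarrow> k \<le> multiplicity p (Suc n)" for k
    using p by (intro power_dvd_iff_le_multiplicity) auto
  ultimately have "{1..N} \<inter> {k. p ^ k dvd Suc n} = {1..multiplicity p (Suc n)}"
    by (intro set_eqI) (simp, arith)
  then have "(\<Sum>k\<in>{1..N}. of_bool (p ^ k dvd Suc n)) = multiplicity p (Suc n)"
    by simp
  moreover have "(\<Sum>k\<in>{1..N}. Suc n div p ^ k)
      = (\<Sum>k\<in>{1..N}. n div p ^ k) + (\<Sum>k\<in>{1..N}. of_bool (p ^ k dvd Suc n))"
    unfolding sum.distrib[symmetric] by (intro sum.cong refl) (simp add: div_Suc dvd_eq_mod_eq_0)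
  moreover have "multiplicity p (fact (Suc n) :: nat) = multiplicity p (Suc n * fact n)"
    by (simp only: fact_Suc of_nat_id)
  moreover have "\<dots> = multiplicity p (Suc n) + multiplicity p (fact n :: nat)"
    using p by (intro prime_elem_multiplicity_mult_distrib) auto
  ultimately show ?case
    using Suc by simp
qed

lemma card_prime_powers_le:
  assumes p: "prime p" and y: "1 \<le> y"
  shows "real (card ({1..N} \<inter> {k. p ^ k \<le> y})) * ln (real p) \<le> ln (real y)"
proof -
  have lp: "0 < ln (real p)"
    using p by (rule ln_prime_gt_0)
  define r where "r = ln (real y) / ln (real p)"
  have "{1..N} \<inter> {k. p ^ k \<le> y} \<subseteq> {1..nat \<lfloor>r\<rfloor>}"
  proof
    fix k assume k: "k \<in> {1..N} \<inter> {k. p ^ k \<le> y}"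
    then have "real p ^ k \<le> real y"
      by (simp flip: of_nat_power)
    then have "ln (real p ^ k) \<le> ln (real y)"
      using p y by (subst ln_le_cancel_iff) (auto simp: prime_gt_0_nat)
    then have "real k * ln (real p) \<le> ln (real y)"
      using p by (simp add: ln_realpow prime_gt_0_nat)
    then have "real k \<le> r"
      unfolding r_def using lp by (simp add: field_simps)
    with k show "k \<in> {1..nat \<lfloor>r\<rfloor>}"
      by (simp add: le_nat_floor)
  qed
  then have "card ({1..N} \<inter> {k. p ^ k \<le> y}) \<le> card {1..nat \<lfloor>r\<rfloor>}"
    by (intro card_mono) auto
  then have "real (card ({1..N} \<inter> {k. p ^ k \<le> y})) \<le> real (nat \<lfloor>r\<rfloor>)"
    by simp
  also have "\<dots> \<le> r"
    unfolding r_def using lp y by simp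
  finally show ?thesis
    unfolding r_def using lp by (simp add: field_simps)
qed

lemma double_div_le:
  assumes "0 < (d::nat)"
  shows "(2 * m) div d \<le> 2 * (m div d) + of_bool (d \<le> 2 * m)"
proof (cases "d \<le> 2 * m")
  case True
  have "m = d * (m div d) + m mod d" "m mod d < d"
    using assms by simp_all
  then have "2 * m < 2 * (d * (m div d)) + 2 * d"
    by linarith
  also have "\<dots> = d * (2 * (m div d) + 2)"
    by (simp add: algebra_simps)
  finally have "(2 * m) div d < 2 * (m div d) + 2"
    using assms by (simp add: div_less_iff_less_mult mult.commute)
  then show ?thesis
    using True by simp
qed simp

text \<open>By Legendre's formula every summand of
  \<open>v\<^sub>p((2m)!) - 2 v\<^sub>p(m!) = \<Sum>\<^sub>k (\<lfloor>2m/p\<^sup>k\<rfloor> - 2\<lfloor>m/p\<^sup>k\<rfloor>)\<close> is at most 1,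
  and it vanishes once \<open>p\<^sup>k > 2m\<close>.\<close>
lemma multiplicity_central_binomial_le:
  assumes p: "prime p" and m: "1 \<le> m"
  shows "real (multiplicity p (2 * m choose m)) * ln (real p) \<le> ln (real (2 * m))"
proof -
  define C where "C = 2 * m choose m"
  have "fact (2 * m) = (fact m * fact m * C :: nat)"
    using binomial_fact_lemma[of m "2 * m"] by (simp add: C_def mult_2 ac_simps)
  then have split: "multiplicity p (fact (2 * m) :: nat) = 2 * multiplicity p (fact m :: nat) + multiplicity p C"
    using p by (simp add: prime_elem_multiplicity_mult_distrib C_def)
  have fact_m: "multiplicity p (fact m :: nat) = (\<Sum>k\<in>{1..2 * m}. m div p ^ k)"
    by (rule multiplicity_fact[OF p]) simp
  have "multiplicity p (fact (2 * m) :: nat) = (\<Sum>k\<in>{1..2 * m}. (2 * m) div p ^ k)"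
    by (rule multiplicity_fact[OF p]) simp
  also have "\<dots> \<le> (\<Sum>k\<in>{1..2 * m}. 2 * (m div p ^ k) + of_bool (p ^ k \<le> 2 * m))"
    using p by (intro sum_mono double_div_le) (simp add: prime_gt_0_nat)
  also have "\<dots> = 2 * multiplicity p (fact m :: nat) + card ({1..2 * m} \<inter> {k. p ^ k \<le> 2 * m})"
    by (simp add: fact_m sum.distrib sum_distrib_left)
  finally have "multiplicity p C \<le> card ({1..2 * m} \<inter> {k. p ^ k \<le> 2 * m})"
    using split by linarith
  then have "real (multiplicity p C) * ln (real p)
      \<le> real (card ({1..2 * m} \<inter> {k. p ^ k \<le> 2 * m})) * ln (real p)"
    using ln_prime_gt_0[OF p] by (intro mult_right_mono) auto
  also have "\<dots> \<le> ln (real (2 * m))"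
    using m by (intro card_prime_powers_le p) simp
  finally show ?thesis
    unfolding C_def .
qed

lemma prime_factor_central_binomial_le:
  assumes "p \<in> prime_factors (2 * m choose m)"
  shows "p \<le> 2 * m"
proof -
  have "fact (2 * m) = (fact m * fact m * (2 * m choose m) :: nat)"
    using binomial_fact_lemma[of m "2 * m"] by (simp add: mult_2 ac_simps)
  then have "p dvd fact (2 * m)"
    using assms by (metis dvd_mult in_prime_factors_imp_dvd)
  then show ?thesis
    using assms prime_dvd_fact_iff by (auto simp: in_prime_factors_iff)
qed

lemma multiplicity_central_binomial_le_1:
  assumes p: "prime p" and m: "1 \<le> m" and large: "2 * m < p * p"
  shows "multiplicity p (2 * m choose m) \<le> 1"
proof -
  have "real (2 * m) < real p ^ 2"
    using large by (simp add: power2_eq_square flip: of_nat_mult)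
  then have "ln (real (2 * m)) < ln (real p ^ 2)"
    using m p by (subst ln_less_cancel_iff) (auto simp: prime_gt_0_nat)
  then have "real (multiplicity p (2 * m choose m)) * ln (real p) < 2 * ln (real p)"
    using multiplicity_central_binomial_le[OF p m] p by (simp add: ln_realpow prime_gt_0_nat)
  then show ?thesis
    using ln_prime_gt_0[OF p] by (simp add: mult_less_cancel_right)
qed

text \<open>Only the at most \<open>\<surd>(2m)\<close> primes with \<open>p\<^sup>2 \<le> 2m\<close> can divide \<open>2m choose m\<close> more than once.\<close>
lemma ln_central_binomial_le:
  assumes m: "1 \<le> m"
  shows "ln (real (2 * m choose m)) \<le> chebyshev_theta (2 * m) + sqrt (real (2 * m)) * ln (real (2 * m))"
proof -
  define C where "C = 2 * m choose m"
  define F where "F = prime_factors C"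
  have F_primes: "prime p" "p \<le> 2 * m" if "p \<in> F" for p
    using that prime_factor_central_binomial_le by (auto simp: F_def C_def in_prime_factors_iff)
  have per_prime: "real (multiplicity p C) * ln (real p)
      \<le> ln (real p) + of_bool (p * p \<le> 2 * m) * ln (real (2 * m))" if "p \<in> F" for p
  proof (cases "p * p \<le> 2 * m")
    case True
    then show ?thesis
      using multiplicity_central_binomial_le[OF F_primes(1)[OF that] m] ln_prime_gt_0[of p]
        F_primes[OF that] by (simp add: C_def)
  next
    case False
    then have "real (multiplicity p C) \<le> 1"
      using multiplicity_central_binomial_le_1[OF F_primes(1)[OF that] m] by (simp add: C_def)
    then show ?thesis
      using False ln_prime_gt_0[OF F_primes(1)[OF that]]
        mult_right_mono[of "real (multiplicity p C)" 1 "ln (real p)"] by simp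
  qed
  have "ln (real C) = (\<Sum>p\<in>F. real (multiplicity p C) * ln (real p))"
    unfolding F_def by (rule ln_eq_sum_multiplicity) (simp add: C_def)
  also have "\<dots> \<le> (\<Sum>p\<in>F. ln (real p))
                  + (\<Sum>p\<in>F. of_bool (p * p \<le> 2 * m)) * ln (real (2 * m))"
    unfolding sum_distrib_right sum.distrib[symmetric] by (intro sum_mono per_prime)
  also have "(\<Sum>p\<in>F. ln (real p)) \<le> chebyshev_theta (2 * m)"
    unfolding chebyshev_theta_def
    by (intro sum_mono2) (auto intro: F_primes less_imp_le ln_prime_gt_0)
  also have "(\<Sum>p\<in>F. of_bool (p * p \<le> 2 * m)) = real (card (F \<inter> {p. p * p \<le> 2 * m}))"
    by (simp add: F_def)
  also have "\<dots> * ln (real (2 * m)) \<le> sqrt (real (2 * m)) * ln (real (2 * m))"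
    using m F_primes(1) not_prime_0 by (intro mult_right_mono card_square_bounded_le_sqrt) (blast, simp)
  finally show ?thesis
    unfolding C_def by simp
qed

lemma chebyshev_theta_double_ge:
  assumes m: "1 \<le> m"
  shows "real m * ln 2 - sqrt (real (2 * m)) * ln (real (2 * m)) \<le> chebyshev_theta (2 * m)"
proof -
  have "(real (2 * m) / real m) ^ m \<le> real (2 * m choose m)"
    by (rule binomial_ge_n_over_k_pow_k) simp
  then have "2 ^ m \<le> real (2 * m choose m)"
    using m by simp
  then have "ln (2 ^ m) \<le> ln (real (2 * m choose m))"
    by (subst ln_le_cancel_iff) auto
  then show ?thesis
    using ln_central_binomial_le[OF m] by (simp add: ln_realpow)
qed

lemma eventually_chebyshev_theta_ge: "eventually (\<lambda>x. real x / 10 \<le> chebyshev_theta x) sequentially"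
proof -
  have "eventually (\<lambda>y::real. y / 10 \<le> (y - 1) / 3 - sqrt y * ln y) at_top"
    by real_asymp
  moreover have "eventually (\<lambda>y::real. 1 \<le> y) at_top"
    by (rule eventually_ge_at_top)
  ultimately have "eventually (\<lambda>y::real. y / 10 \<le> (y - 1) / 2 * ln 2 - sqrt y * ln y) at_top"
  proof eventually_elim
    case (elim y)
    have "(y - 1) / 3 \<le> (y - 1) / 2 * ln 2"
      using ln2_ge_two_thirds mult_left_mono[of "2 / 3" "ln 2" "(y - 1) / 2"] elim(2) by simp
    then show ?case
      using elim(1) by linarith
  qed
  then have "eventually (\<lambda>x. real x / 10 \<le> (real x - 1) / 2 * ln 2 - sqrt (real x) * ln (real x))
      sequentially"
    using filterlim_real_sequentially by (rule eventually_compose_filterlim)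
  moreover have "eventually (\<lambda>x. 2 \<le> x) sequentially"
    by (rule eventually_ge_at_top)
  ultimately show ?thesis
  proof eventually_elim
    case (elim x)
    define m where "m = x div 2"
    have m: "1 \<le> m" "2 * m \<le> x" "real x - 1 \<le> 2 * real m"
      using elim(2) unfolding m_def by linarith+
    have "real x / 10 \<le> (real x - 1) / 2 * ln 2 - sqrt (real x) * ln (real x)"
      by (fact elim(1))
    also have "\<dots> \<le> real m * ln 2 - sqrt (real (2 * m)) * ln (real (2 * m))"
      using m by (intro diff_mono mult_right_mono mult_mono) auto
    also have "\<dots> \<le> chebyshev_theta (2 * m)"
      using m(1) by (rule chebyshev_theta_double_ge)
    also have "\<dots> \<le> chebyshev_theta x"
      using m(2) by (rule chebyshev_theta_mono)
    finally show ?case .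
  qed
qed

lemma ln_div_le_dyadic_count:
  assumes p: "0 < p" "p \<le> q"
  shows "ln (real q / real p) \<le> ln 2 * real (card ({..<q} \<inter> {j. p * 2 ^ j \<le> q}))"
proof -
  define y where "y = real q / real p"
  have y: "1 \<le> y"
    unfolding y_def using p by simp
  have log_y: "0 \<le> log 2 y"
    using y by simp
  define t where "t = nat \<lfloor>log 2 y\<rfloor>"
  have "{..t} \<subseteq> {..<q} \<inter> {j. p * 2 ^ j \<le> q}"
  proof
    fix j assume "j \<in> {..t}"
    then have "real j \<le> real t"
      by simp
    also have "\<dots> \<le> log 2 y"
      unfolding t_def using log_y by (rule of_nat_floor)
    finally have "real j \<le> log 2 y" .
    then have "2 ^ j \<le> y"
      using y by (simp add: le_log_iff powr_realpow)
    then have "real (p * 2 ^ j) \<le> real q"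
      unfolding y_def using p by (simp add: field_simps)
    then have pj: "p * 2 ^ j \<le> q"
      by (simp only: of_nat_le_iff)
    have "j < 2 ^ j"
      by simp
    also have "\<dots> \<le> p * 2 ^ j"
      using p by simp
    finally show "j \<in> {..<q} \<inter> {j. p * 2 ^ j \<le> q}"
      using pj by simp
  qed
  then have "card {..t} \<le> card ({..<q} \<inter> {j. p * 2 ^ j \<le> q})"
    by (intro card_mono) auto
  moreover have "log 2 y \<le> real t + 1"
    unfolding t_def using log_y floor_correct[of "log 2 y"] by simp
  ultimately have "log 2 y \<le> real (card ({..<q} \<inter> {j. p * 2 ^ j \<le> q}))"
    by simp
  then show ?thesis
    unfolding y_def by (simp add: log_def field_simps)
qed

lemma prime_pi_le: "prime_pi x \<le> x"
proof -
  have "{p. prime p \<and> p \<le> x} \<subseteq> {1..x}"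
    by (auto dest: prime_gt_0_nat)
  then have "prime_pi x \<le> card {1..x}"
    unfolding prime_pi_def by (intro card_mono) auto
  then show ?thesis
    by simp
qed

text \<open>Below \<open>\<surd>q\<close> the trivial bound \<open>\<pi>(y) \<le> y\<close> is used, above it Chebyshev's bound, where
  \<open>ln y \<ge> ln q / 2\<close>.\<close>
lemma prime_pi_le_mixed_bound:
  assumes q: "4 \<le> real q" and yz: "real y \<le> z"
  shows "real (prime_pi y) \<le> 16 * z / ln (real q) + sqrt (sqrt (real q)) * sqrt z"
proof -
  have lq: "0 < ln (real q)"
    using q by simp
  have z: "0 \<le> z"
    using yz of_nat_0_le_iff order_trans by blast
  show ?thesis
  proof (cases "q \<le> y * y")
    case True
    then have "real q \<le> real y * real y"
      by (simp flip: of_nat_mult)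
    have y2: "2 \<le> real y"
    proof (rule ccontr)
      assume "\<not> 2 \<le> real y"
      then have "y * y \<le> 1 * 1"
        by (intro mult_le_mono) auto
      then show False
        using True q by simp
    qed
    have "ln (real q) \<le> ln (real y * real y)"
      using \<open>real q \<le> real y * real y\<close> q by (subst ln_le_cancel_iff) auto
    also have "\<dots> = 2 * ln (real y)"
      using y2 by (simp add: ln_mult)
    finally have lqy: "ln (real q) / 2 \<le> ln (real y)"
      by simp
    have "real (prime_pi y) \<le> 8 * real y / ln (real y)"
      using prime_pi_mult_ln_le[of y] y2 by (simp add: field_simps)
    also have "\<dots> \<le> 8 * real y / (ln (real q) / 2)"
      using lqy lq y2 by (intro divide_left_mono) auto
    also have "\<dots> \<le> 16 * z / ln (real q)"
      using yz lq by (simp add: divide_right_mono)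
    finally show ?thesis
      using z by (simp add: add_increasing2)
  next
    case False
    then have "real y * real y < real q"
      by (simp flip: of_nat_mult)
    then have "sqrt (real y) \<le> sqrt (sqrt (real q))"
      by (simp add: real_le_rsqrt power2_eq_square)
    moreover have "sqrt (real y) \<le> sqrt z"
      using yz by simp
    ultimately have "sqrt (real y) * sqrt (real y) \<le> sqrt (sqrt (real q)) * sqrt z"
      by (intro mult_mono) auto
    then have "real (prime_pi y) \<le> sqrt (sqrt (real q)) * sqrt z"
      using prime_pi_le[of y] by simp
    then show ?thesis
      using z lq by (simp add: add_increasing)
  qed
qed

lemma sum_power_le_inverse:
  fixes r :: real
  assumes "0 \<le> r" "r < 1"
  shows "(\<Sum>j<n. r ^ j) \<le> 1 / (1 - r)"
  using assms by (simp add: sum_gp_strict divide_right_mono)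

lemma sum_prime_pi_dyadic_le:
  assumes q: "4 \<le> q"
  shows "(\<Sum>j<q. real (prime_pi (q div 2 ^ j)))
           \<le> 32 * real q / ln (real q) + 4 * sqrt (sqrt (real q)) * sqrt (real q)"
proof -
  have lq: "0 < ln (real q)"
    using q by simp
  have "sqrt (1 / 2) \<le> sqrt ((3 / 4)\<^sup>2 :: real)"
    by (subst real_sqrt_le_iff) (simp add: power2_eq_square)
  then have "sqrt (1 / 2) \<le> (3 / 4 :: real)"
    by simp
  then have "1 / (1 - sqrt (1 / 2)) \<le> (4 :: real)" "sqrt (1 / 2) < (1 :: real)"
    by (simp_all add: field_simps)
  then have geom: "(\<Sum>j<q. sqrt (1 / 2) ^ j) \<le> (4 :: real)"
    using sum_power_le_inverse[of "sqrt (1 / 2)" q] by simp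
  have "(\<Sum>j<q. real (prime_pi (q div 2 ^ j)))
      \<le> (\<Sum>j<q. 16 * real q / ln (real q) * (1 / 2) ^ j
                 + sqrt (sqrt (real q)) * sqrt (real q) * sqrt (1 / 2) ^ j)"
  proof (rule sum_mono)
    fix j
    have "real (q div 2 ^ j) \<le> real q * (1 / 2) ^ j"
      using of_nat_div_le_of_nat[of q "2 ^ j"] by (simp add: power_one_over)
    then show "real (prime_pi (q div 2 ^ j))
        \<le> 16 * real q / ln (real q) * (1 / 2) ^ j + sqrt (sqrt (real q)) * sqrt (real q) * sqrt (1 / 2) ^ j"
      using prime_pi_le_mixed_bound[of q "q div 2 ^ j" "real q * (1 / 2) ^ j"] q
      by (simp add: real_sqrt_mult real_sqrt_power)
  qed
  also have "\<dots> = 16 * real q / ln (real q) * (\<Sum>j<q. (1 / 2) ^ j)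
                  + sqrt (sqrt (real q)) * sqrt (real q) * (\<Sum>j<q. sqrt (1 / 2) ^ j)"
    by (simp add: sum.distrib sum_distrib_left)
  also have "\<dots> \<le> 16 * real q / ln (real q) * 2 + sqrt (sqrt (real q)) * sqrt (real q) * 4"
    using sum_power_le_inverse[of "1 / 2" q] geom lq by (intro add_mono mult_left_mono) auto
  finally show ?thesis
    by simp
qed

text \<open>A Mertens-type estimate: counting \<open>ln (q / p)\<close> in units of \<open>ln 2\<close> and exchanging the
  order of summation gives \<open>\<Sum>\<^sub>j \<pi>(q / 2\<^sup>j)\<close>.\<close>
lemma sum_ln_div_primes_le:
  assumes q: "4 \<le> q"
  shows "(\<Sum>p | prime p \<and> p < q. ln (real q / real p))
           \<le> 32 * real q / ln (real q) + 4 * sqrt (sqrt (real q)) * sqrt (real q)"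
proof -
  define P where "P = {p. prime p \<and> p < q}"
  have "finite P"
    by (simp add: P_def)
  have "(\<Sum>p\<in>P. ln (real q / real p)) \<le> (\<Sum>p\<in>P. ln 2 * (\<Sum>j<q. of_bool (p * 2 ^ j \<le> q)))"
    using ln_div_le_dyadic_count by (intro sum_mono) (auto simp: P_def prime_gt_0_nat Int_def)
  also have "\<dots> = ln 2 * (\<Sum>j<q. \<Sum>p\<in>P. of_bool (p * 2 ^ j \<le> q))"
    by (subst sum.swap) (simp add: sum_distrib_left)
  also have "\<dots> = ln 2 * (\<Sum>j<q. real (card (P \<inter> {p. p * 2 ^ j \<le> q})))"
    using \<open>finite P\<close> by simp
  also have "\<dots> \<le> 1 * (\<Sum>j<q. real (prime_pi (q div 2 ^ j)))"
  proof (intro mult_mono sum_mono)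
    show "real (card (P \<inter> {p. p * 2 ^ j \<le> q})) \<le> real (prime_pi (q div 2 ^ j))" for j
      unfolding prime_pi_def P_def
      by (intro of_nat_mono card_mono, simp) (auto simp: less_eq_div_iff_mult_less_eq)
  qed (use ln_le_minus_one[of 2] in \<open>auto intro: sum_nonneg\<close>)
  also have "\<dots> \<le> 32 * real q / ln (real q) + 4 * sqrt (sqrt (real q)) * sqrt (real q)"
    using sum_prime_pi_dyadic_le[OF q] by simp
  finally show ?thesis
    by (simp add: P_def)
qed

section \<open>Reduced numbers\<close>

lemma bigOmega_eq_sum_multiplicity:
  "bigOmega n = (\<Sum>p\<in>prime_factors n. multiplicity p n)"
  unfolding bigOmega_def size_multiset_overloaded_eq
  by (rule sum.cong) (auto simp: count_prime_factorization)

lemma reduced_half_exponent_mult_ln_less: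
  assumes n: "reduced n" and p: "prime p" "p \<noteq> 2" and q: "prime q" "q \<noteq> 2" "\<not> q dvd n"
  shows "real ((multiplicity p n + 1) div 2) * ln (real p) < ln (real q)"
proof -
  have "multiplicity q n = 0"
    using q(3) by (rule not_dvd_imp_multiplicity_0)
  then have "\<lfloor>real (multiplicity p n + 1) / real (multiplicity q n + 2)\<rfloor>
      = int ((multiplicity p n + 1) div 2)"
    using floor_divide_of_nat_eq[of "multiplicity p n + 1" 2] by simp
  moreover have "real_of_int \<lfloor>real (multiplicity p n + 1) / real (multiplicity q n + 2)\<rfloor>
      < ln (real q) / ln (real p)"
    using n p q unfolding reduced_def by blast
  ultimately have "real ((multiplicity p n + 1) div 2) < ln (real q) / ln (real p)"
    by simp
  then show ?thesis
    using ln_prime_gt_0[OF p(1)] by (simp add: field_simps)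
qed

lemma reduced_prime_factor_less:
  assumes n: "reduced n" and q: "prime q" "q \<noteq> 2" "\<not> q dvd n" and p: "prime p" "p dvd n"
  shows "p < q"
proof (rule ccontr)
  assume "\<not> p < q"
  moreover have "p \<noteq> q"
    using p q by auto
  ultimately have "q < p"
    by simp
  then have "ln (real q) < ln (real p)" "p \<noteq> 2"
    using prime_gt_0_nat[OF q(1)] prime_ge_2_nat[OF q(1)] by auto
  then have "real ((multiplicity p n + 1) div 2) * ln (real p) < 1 * ln (real p)"
    using reduced_half_exponent_mult_ln_less[OF n p(1) _ q] by simp
  then have "(multiplicity p n + 1) div 2 = 0"
    using ln_prime_gt_0[OF p(1)] by (simp add: mult_less_cancel_right)
  moreover have "0 < n"
    using n by (simp add: reduced_def)
  then have "1 \<le> multiplicity p n"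
    using p by (simp add: Suc_le_eq prime_multiplicity_gt_zero_iff)
  ultimately show False
    by simp
qed

lemma reduced_exponent_mult_ln_le:
  assumes n: "reduced n" and q: "prime q" "q \<noteq> 2" "\<not> q dvd n" and p: "prime p"
  shows "real (multiplicity p n) * ln (real p) \<le> 2 * ln (real q) + 3"
proof (cases "p = 2")
  case True
  have "(2::nat) ^ multiplicity 2 n < 8 * q\<^sup>2"
    using n q by (simp add: reduced_def not_dvd_imp_multiplicity_0)
  then have "real ((2::nat) ^ multiplicity 2 n) < real (8 * q\<^sup>2)"
    by (simp only: of_nat_less_iff)
  then have "(2::real) ^ multiplicity 2 n < 8 * real q ^ 2"
    by simp
  then have "ln ((2::real) ^ multiplicity 2 n) < ln (8 * real q ^ 2)"
    using prime_gt_0_nat[OF q(1)] by (subst ln_less_cancel_iff) auto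
  also have "\<dots> = ln 8 + 2 * ln (real q)"
    using prime_gt_0_nat[OF q(1)] by (simp add: ln_mult ln_realpow)
  also have "ln (8::real) = 3 * ln 2"
    using ln_realpow[of 2 3] by simp
  finally show ?thesis
    using True ln_le_minus_one[of 2] by (simp add: ln_realpow)
next
  case False
  have "multiplicity p n \<le> 2 * ((multiplicity p n + 1) div 2)"
    by presburger
  then have "real (multiplicity p n) * ln (real p) \<le> real (2 * ((multiplicity p n + 1) div 2)) * ln (real p)"
    using ln_prime_gt_0[OF p] by (intro mult_right_mono) auto
  also have "\<dots> = 2 * (real ((multiplicity p n + 1) div 2) * ln (real p))"
    by simp
  also have "\<dots> < 2 * ln (real q)"
    using reduced_half_exponent_mult_ln_less[OF n p False q] by simp
  finally show ?thesis
    by simp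
qed

definition weighted_log :: "nat \<Rightarrow> (nat \<Rightarrow> real) \<Rightarrow> real" where
  "weighted_log q a = (\<Sum>p | prime p \<and> p < q. a p * ln (real p))"

definition exponent_sum :: "nat \<Rightarrow> (nat \<Rightarrow> real) \<Rightarrow> real" where
  "exponent_sum q a = (\<Sum>p | prime p \<and> p < q. a p)"

text \<open>The exponent vector of \<open>n = \<Prod> p\<^sup>a\<^sup>p\<close>, with \<open>q\<close> the least odd prime not dividing \<open>n\<close>;
  then \<open>weighted_log q a = ln n\<close> and \<open>exponent_sum q a = \<Omega>(n)\<close>.\<close>
locale exponent_profile =
  fixes q :: nat and a :: "nat \<Rightarrow> real"
  assumes q_ge_3: "3 \<le> q"
    and a_nonneg: "\<And>p. 0 \<le> a p"
    and a_odd_ge_1: "\<And>p. prime p \<Longrightarrow> p < q \<Longrightarrow> p \<noteq> 2 \<Longrightarrow> 1 \<le> a p"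
    and a_mult_ln_le: "\<And>p. prime p \<Longrightarrow> p < q \<Longrightarrow> a p * ln (real p) \<le> 2 * ln (real q) + 3"

lemma reduced_exponent_profile:
  assumes n: "reduced n"
  obtains q where "exponent_profile q (\<lambda>p. real (multiplicity p n))"
    and "weighted_log q (\<lambda>p. real (multiplicity p n)) = ln (real n)"
    and "exponent_sum q (\<lambda>p. real (multiplicity p n)) = real (bigOmega n)"
proof -
  have "0 < n"
    using n by (simp add: reduced_def)
  define Q where "Q = (\<lambda>q. prime q \<and> q \<noteq> 2 \<and> \<not> q dvd n)"
  obtain r where r: "prime r" "n + 2 < r"
    using bigger_prime by blast
  then have "Q r"
    using \<open>0 < n\<close> by (auto simp: Q_def dest: dvd_imp_le)
  define q where "q = (LEAST q. Q q)"
  have "Q q"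
    unfolding q_def using \<open>Q r\<close> by (rule LeastI)
  then have q: "prime q" "q \<noteq> 2" "\<not> q dvd n"
    by (auto simp: Q_def)
  have below: "p dvd n" if "prime p" "p \<noteq> 2" "p < q" for p
    using not_less_Least[of p Q] that by (auto simp: Q_def q_def)
  have "exponent_profile q (\<lambda>p. real (multiplicity p n))"
  proof
    show "3 \<le> q"
      using q prime_ge_2_nat[of q] by linarith
    show "1 \<le> real (multiplicity p n)" if "prime p" "p < q" "p \<noteq> 2" for p
      using below[OF that(1,3,2)] that \<open>0 < n\<close> by (simp add: Suc_le_eq prime_multiplicity_gt_zero_iff)
    show "real (multiplicity p n) * ln (real p) \<le> 2 * ln (real q) + 3" if "prime p" for p
      using reduced_exponent_mult_ln_le[OF n q that] .
  qed simp
  moreover have "prime_factors n \<subseteq> {p. prime p \<and> p < q}"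
    using reduced_prime_factor_less[OF n q] by (auto simp: in_prime_factors_iff)
  then have "weighted_log q (\<lambda>p. real (multiplicity p n)) = ln (real n)"
    and "exponent_sum q (\<lambda>p. real (multiplicity p n)) = real (bigOmega n)"
    using \<open>0 < n\<close>
    unfolding weighted_log_def exponent_sum_def ln_eq_sum_multiplicity[OF \<open>0 < n\<close>]
      bigOmega_eq_sum_multiplicity of_nat_sum
    by (auto intro!: sum.mono_neutral_right simp: in_prime_factors_iff not_dvd_imp_multiplicity_0)
  ultimately show ?thesis
    using that by blast
qed

section \<open>The estimate for exponent profiles\<close>

lemma crude_quotient_estimate:
  fixes Om L l D :: real
  assumes "0 \<le> Om" "Om \<le> 2 * L" "0 < L" "0 < l" "l \<le> D"
  shows "\<bar>Om - L / l\<bar> \<le> (2 * D\<^sup>2 + D) * L / l\<^sup>2"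
proof -
  have "0 \<le> L / l"
    using assms by simp
  then have "\<bar>Om - L / l\<bar> \<le> 2 * L + L / l"
    unfolding abs_le_iff using assms(1,2) by (intro conjI) linarith+
  also have "\<dots> = (2 * l\<^sup>2 + l) * L / l\<^sup>2"
    using assms by (simp add: field_simps power2_eq_square)
  also have "\<dots> \<le> (2 * D\<^sup>2 + D) * L / l\<^sup>2"
    using assms by (intro divide_right_mono mult_right_mono add_mono mult_left_mono power_mono) auto
  finally show ?thesis .
qed

lemma abs_ln_sub_ln_le_5:
  fixes x y :: real
  assumes "0 < x" "x / 20 \<le> y" "y \<le> 24 * x"
  shows "\<bar>ln y - ln x\<bar> \<le> 5"
proof -
  have "ln (24::real) \<le> ln 32"
    by (subst ln_le_cancel_iff) auto
  also have "ln (32::real) = 5 * ln 2"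
    using ln_realpow[of 2 5] by simp
  finally have ln_24: "ln (24::real) \<le> 5"
    using ln_le_minus_one[of 2] by linarith
  have "ln (x / 20) \<le> ln y" "ln y \<le> ln (24 * x)"
    using assms by (subst ln_le_cancel_iff; simp)+
  moreover have "ln (x / 20) = ln x - ln 20" "ln (24 * x) = ln 24 + ln x"
    using assms(1) by (simp_all add: ln_div ln_mult)
  moreover have "ln (20::real) \<le> ln 24"
    by (subst ln_le_cancel_iff) auto
  ultimately show ?thesis
    using ln_24 by linarith
qed

lemma perturbed_quotient_estimate:
  fixes Om L E Q l q :: real
  assumes eq: "Om * Q = L + E" and E: "0 \<le> E" "E \<le> 200 * q / Q" and qL: "q \<le> 20 * L"
    and Q: "10 \<le> Q" and l: "0 < l" "l \<le> 2 * Q" "\<bar>l - Q\<bar> \<le> 5" and L: "0 < L"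
  shows "\<bar>Om - L / l\<bar> \<le> 16010 * L / l\<^sup>2"
proof -
  have Q0: "0 < Q"
    using Q by simp
  have inv_Q: "1 / Q \<le> 2 / l"
    using l Q0 by (simp add: field_simps)
  have Om: "Om = (L + E) / Q"
    using eq Q0 by (simp add: field_simps)
  have "Om - L / l = E / Q + L * (l - Q) / (Q * l)"
    unfolding Om using Q0 l by (simp add: field_simps)
  then have "\<bar>Om - L / l\<bar> \<le> E / Q + L * \<bar>l - Q\<bar> / (Q * l)"
    using E Q0 l L by (simp add: abs_mult abs_triangle_ineq[THEN order_trans])
  also have "E / Q \<le> 4000 * L * (1 / Q) * (1 / Q)"
    using E qL Q0 by (simp add: field_simps)
  also have "\<dots> \<le> 4000 * L * (2 / l) * (2 / l)"
    using inv_Q L l Q0 by (intro mult_mono mult_left_mono) auto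
  also have "L * \<bar>l - Q\<bar> / (Q * l) \<le> 5 * L * (1 / Q) * (1 / l)"
    using l(3) L Q0 l by (simp add: field_simps mult_left_mono)
  also have "\<dots> \<le> 5 * L * (2 / l) * (1 / l)"
    using inv_Q L l by (intro mult_right_mono mult_left_mono) auto
  finally show ?thesis
    by (simp add: power2_eq_square field_simps)
qed

definition sufficiently_large :: "nat \<Rightarrow> bool" where
  "sufficiently_large q \<longleftrightarrow> 22 \<le> q \<and> 10 \<le> ln (real q) \<and>
     real (q - 1) / 10 \<le> chebyshev_theta (q - 1) \<and>
     20 * sqrt (sqrt (real q)) * sqrt (real q) + 2 * sqrt (real q) * (2 * ln (real q) + 3) * ln (real q)
       \<le> 40 * real q / ln (real q)"

lemma eventually_sufficiently_large: "eventually sufficiently_large sequentially"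
proof -
  have "eventually (\<lambda>y::real. 10 \<le> ln y \<and>
      20 * sqrt (sqrt y) * sqrt y + 2 * sqrt y * (2 * ln y + 3) * ln y \<le> 40 * y / ln y) at_top"
    by (intro eventually_conj; real_asymp)
  then have "eventually (\<lambda>q. 10 \<le> ln (real q) \<and> 20 * sqrt (sqrt (real q)) * sqrt (real q)
      + 2 * sqrt (real q) * (2 * ln (real q) + 3) * ln (real q) \<le> 40 * real q / ln (real q)) sequentially"
    using filterlim_real_sequentially by (rule eventually_compose_filterlim)
  moreover have "eventually (\<lambda>q. real (q - 1) / 10 \<le> chebyshev_theta (q - 1)) sequentially"
    using eventually_chebyshev_theta_ge by (subst eventually_sequentially_Suc[symmetric]) simp
  moreover have "eventually (\<lambda>q. 22 \<le> q) sequentially"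
    by (rule eventually_ge_at_top)
  ultimately show ?thesis
    unfolding sufficiently_large_def by eventually_elim blast
qed

context exponent_profile
begin

lemma exponent_le_mult_ln:
  assumes "prime p"
  shows "a p \<le> 2 * (a p * ln (real p))"
proof -
  have "ln 2 \<le> ln (real p)"
    using prime_ge_2_nat[OF assms] by simp
  then have "1 \<le> 2 * ln (real p)"
    using ln2_ge_two_thirds by linarith
  then show ?thesis
    using a_nonneg[of p] mult_left_mono[of 1 "2 * ln (real p)" "a p"] by simp
qed

lemma exponent_sum_le_weighted_log: "exponent_sum q a \<le> 2 * weighted_log q a"
  unfolding exponent_sum_def weighted_log_def sum_distrib_left
  by (intro sum_mono exponent_le_mult_ln) simp

lemma weighted_log_le: "weighted_log q a \<le> real (prime_pi q) * (2 * ln (real q) + 3)"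
proof -
  have "weighted_log q a \<le> (\<Sum>p | prime p \<and> p < q. 2 * ln (real q) + 3)"
    unfolding weighted_log_def by (intro sum_mono a_mult_ln_le) auto
  also have "\<dots> = real (card {p. prime p \<and> p < q}) * (2 * ln (real q) + 3)"
    by simp
  also have "\<dots> \<le> real (prime_pi q) * (2 * ln (real q) + 3)"
    unfolding prime_pi_def using q_ge_3 by (intro mult_right_mono of_nat_mono card_mono) auto
  finally show ?thesis .
qed

lemma chebyshev_theta_le_weighted_log: "chebyshev_theta (q - 1) - ln 2 \<le> weighted_log q a"
proof -
  define P where "P = {p. prime p \<and> p < q}"
  have "finite P" "2 \<in> P"
    using q_ge_3 by (auto simp: P_def)
  have "chebyshev_theta (q - 1) = (\<Sum>p\<in>P. ln (real p))"
    unfolding chebyshev_theta_def P_def using q_ge_3 by (intro sum.cong) auto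
  also have "\<dots> = ln 2 + (\<Sum>p\<in>P - {2}. ln (real p))"
    using \<open>finite P\<close> \<open>2 \<in> P\<close> by (simp add: sum.remove)
  also have "(\<Sum>p\<in>P - {2}. ln (real p)) \<le> (\<Sum>p\<in>P - {2}. a p * ln (real p))"
    using a_odd_ge_1 ln_prime_gt_0 by (intro sum_mono) (auto simp: P_def intro!: mult_le_cancel_right1[THEN iffD2])
  also have "\<dots> \<le> (\<Sum>p\<in>P. a p * ln (real p))"
    using \<open>finite P\<close> a_nonneg ln_prime_gt_0
    by (intro sum_mono2) (auto simp: P_def intro!: mult_nonneg_nonneg ln_prime_gt_0[THEN less_imp_le])
  finally show ?thesis
    by (simp add: weighted_log_def P_def)
qed

lemma exponent_sum_mult_ln_eq:
  "exponent_sum q a * ln (real q)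
     = weighted_log q a + (\<Sum>p | prime p \<and> p < q. a p * ln (real q / real p))"
  unfolding exponent_sum_def weighted_log_def sum_distrib_right sum.distrib[symmetric]
  using q_ge_3 by (intro sum.cong) (auto simp: ln_div prime_gt_0_nat algebra_simps)

text \<open>Primes above \<open>\<surd>q\<close> occur with exponent at most 5.\<close>
lemma exponent_mult_ln_div_le:
  assumes Q: "6 \<le> ln (real q)" and p: "prime p" "p < q"
  shows "a p * ln (real q / real p)
           \<le> 5 * ln (real q / real p) + of_bool (p * p \<le> q) * (2 * (2 * ln (real q) + 3) * ln (real q))"
proof -
  have p0: "0 < real p"
    using prime_gt_0_nat[OF p(1)] by simp
  have ln_q_div_p: "ln (real q / real p) = ln (real q) - ln (real p)"
    using p0 q_ge_3 by (simp add: ln_div)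
  have "0 \<le> ln (real q / real p)"
    using p0 p(2) by simp
  show ?thesis
  proof (cases "p * p \<le> q")
    case True
    have "a p \<le> 2 * (2 * ln (real q) + 3)"
      using order_trans[OF exponent_le_mult_ln[OF p(1)]] a_mult_ln_le[OF p] by simp
    moreover have "ln (real q / real p) \<le> ln (real q)"
      using ln_q_div_p ln_prime_gt_0[OF p(1)] by simp
    ultimately have "a p * ln (real q / real p) \<le> 2 * (2 * ln (real q) + 3) * ln (real q)"
      using a_nonneg[of p] \<open>0 \<le> ln (real q / real p)\<close> by (intro mult_mono) auto
    then show ?thesis
      using True \<open>0 \<le> ln (real q / real p)\<close> by simp
  next
    case False
    then have "real q < real p ^ 2"
      by (simp add: power2_eq_square flip: of_nat_mult)
    then have "ln (real q) < ln (real p ^ 2)"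
      using q_ge_3 p0 by (subst ln_less_cancel_iff) auto
    then have "ln (real q) / 2 < ln (real p)"
      using p0 by (simp add: ln_realpow)
    then have "a p * (ln (real q) / 2) \<le> 2 * ln (real q) + 3"
      using a_nonneg[of p] a_mult_ln_le[OF p] mult_left_mono[of "ln (real q) / 2" "ln (real p)" "a p"]
      by linarith
    have "a p \<le> 5"
    proof (rule ccontr)
      assume "\<not> a p \<le> 5"
      then have "5 * (ln (real q) / 2) < a p * (ln (real q) / 2)"
        using Q by (intro mult_strict_right_mono) auto
      with \<open>a p * (ln (real q) / 2) \<le> 2 * ln (real q) + 3\<close> Q show False
        by linarith
    qed
    then show ?thesis
      using False \<open>0 \<le> ln (real q / real p)\<close> by (simp add: mult_right_mono)
  qed
qed

lemma sum_exponent_mult_ln_div_le: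
  assumes q: "10 \<le> ln (real q)"
    and small: "20 * sqrt (sqrt (real q)) * sqrt (real q) + 2 * sqrt (real q) * (2 * ln (real q) + 3) * ln (real q)
                  \<le> 40 * real q / ln (real q)"
  shows "(\<Sum>p | prime p \<and> p < q. a p * ln (real q / real p)) \<le> 200 * real q / ln (real q)"
proof -
  define P where "P = {p. prime p \<and> p < q}"
  define Q where "Q = ln (real q)"
  define K where "K = 2 * (2 * Q + 3) * Q"
  have "finite P"
    by (simp add: P_def)
  have "4 \<le> q"
    using q ln_le_minus_one[of "real q"] by (cases "q = 0") auto
  have "(\<Sum>p\<in>P. a p * ln (real q / real p))
      \<le> (\<Sum>p\<in>P. 5 * ln (real q / real p) + of_bool (p * p \<le> q) * K)"
    unfolding K_def Q_def using q by (intro sum_mono exponent_mult_ln_div_le) (auto simp: P_def)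
  also have "\<dots> = 5 * (\<Sum>p\<in>P. ln (real q / real p)) + real (card (P \<inter> {p. p * p \<le> q})) * K"
    using \<open>finite P\<close> by (simp add: sum.distrib sum_distrib_left sum_distrib_right[symmetric])
  also have "real (card (P \<inter> {p. p * p \<le> q})) * K \<le> sqrt (real q) * K"
    using q by (intro mult_right_mono card_square_bounded_le_sqrt) (auto simp: P_def K_def Q_def)
  also have "(\<Sum>p\<in>P. ln (real q / real p)) \<le> 32 * real q / Q + 4 * sqrt (sqrt (real q)) * sqrt (real q)"
    unfolding P_def Q_def using \<open>4 \<le> q\<close> by (rule sum_ln_div_primes_le)
  also have "5 * (32 * real q / Q + 4 * sqrt (sqrt (real q)) * sqrt (real q)) + sqrt (real q) * K
      = 160 * real q / Q + (20 * sqrt (sqrt (real q)) * sqrt (real q) + 2 * sqrt (real q) * (2 * Q + 3) * Q)"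
    by (simp add: K_def algebra_simps)
  also have "\<dots> \<le> 160 * real q / Q + 40 * real q / Q"
    using small by (simp add: Q_def)
  finally show ?thesis
    by (simp add: P_def Q_def add_divide_distrib[symmetric])
qed

lemma weighted_log_ge_linear:
  assumes "22 \<le> q" "real (q - 1) / 10 \<le> chebyshev_theta (q - 1)"
  shows "real q / 20 \<le> weighted_log q a"
  using chebyshev_theta_le_weighted_log assms ln_le_minus_one[of 2] by (simp add: of_nat_diff)

lemma weighted_log_le_linear:
  assumes "3 \<le> ln (real q)"
  shows "weighted_log q a \<le> 24 * real q"
proof -
  have "weighted_log q a \<le> real (prime_pi q) * (2 * ln (real q) + 3)"
    by (rule weighted_log_le)
  also have "\<dots> \<le> real (prime_pi q) * (3 * ln (real q))"
    using assms by (intro mult_left_mono) auto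
  also have "\<dots> \<le> 24 * real q"
    using prime_pi_mult_ln_le[of q] by simp
  finally show ?thesis .
qed

lemma quotient_estimate_large_q:
  defines "L \<equiv> weighted_log q a"
  assumes large: "sufficiently_large q"
  shows "\<bar>exponent_sum q a - L / ln L\<bar> \<le> 16010 * L / (ln L)\<^sup>2"
proof -
  have q: "22 \<le> q" "10 \<le> ln (real q)" "real (q - 1) / 10 \<le> chebyshev_theta (q - 1)"
    using large unfolding sufficiently_large_def by blast+
  define E where "E = (\<Sum>p | prime p \<and> p < q. a p * ln (real q / real p))"
  have L: "real q / 20 \<le> L" "L \<le> 24 * real q"
    using weighted_log_ge_linear[OF q(1,3)] weighted_log_le_linear q(2) by (simp_all add: L_def)
  then have "\<bar>ln L - ln (real q)\<bar> \<le> 5"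
    using q by (intro abs_ln_sub_ln_le_5) auto
  show ?thesis
  proof (rule perturbed_quotient_estimate[where Q = "ln (real q)" and q = "real q" and E = E])
    show "exponent_sum q a * ln (real q) = L + E"
      unfolding L_def E_def by (rule exponent_sum_mult_ln_eq)
    show "0 \<le> E"
      unfolding E_def using a_nonneg by (intro sum_nonneg mult_nonneg_nonneg) (auto simp: ln_div prime_gt_0_nat)
    show "E \<le> 200 * real q / ln (real q)"
      unfolding E_def using large by (intro sum_exponent_mult_ln_div_le) (auto simp: sufficiently_large_def)
  qed (use L q \<open>\<bar>ln L - ln (real q)\<bar> \<le> 5\<close> in \<open>auto simp: abs_le_iff\<close>)
qed

lemma quotient_estimate_bounded_q:
  fixes N :: nat
  defines "L \<equiv> weighted_log q a" and "D \<equiv> max 1 (ln (real N * (2 * ln (real N) + 3)))"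
  assumes "q \<le> N" "1 < L"
  shows "\<bar>exponent_sum q a - L / ln L\<bar> \<le> (2 * D\<^sup>2 + D) * L / (ln L)\<^sup>2"
proof (rule crude_quotient_estimate)
  have "L \<le> real (prime_pi q) * (2 * ln (real q) + 3)"
    unfolding L_def by (rule weighted_log_le)
  also have "\<dots> \<le> real N * (2 * ln (real N) + 3)"
    using prime_pi_le[of q] assms(3) q_ge_3 by (intro mult_mono) auto
  finally show "ln L \<le> D"
    unfolding D_def using \<open>1 < L\<close> by (simp add: le_max_iff_disj)
  show "exponent_sum q a \<le> 2 * L"
    unfolding L_def by (rule exponent_sum_le_weighted_log)
  show "0 \<le> exponent_sum q a"
    unfolding exponent_sum_def using a_nonneg by (simp add: sum_nonneg)
qed (use \<open>1 < L\<close> in auto)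

end

lemma exponent_profile_estimate:
  obtains C :: real where "0 < C"
    and "\<And>q a. exponent_profile q a \<Longrightarrow> 1 < weighted_log q a \<Longrightarrow>
           \<bar>exponent_sum q a - weighted_log q a / ln (weighted_log q a)\<bar>
             \<le> C * weighted_log q a / (ln (weighted_log q a))\<^sup>2"
proof -
  obtain N where N: "\<And>q. N \<le> q \<Longrightarrow> sufficiently_large q"
    using eventually_sufficiently_large unfolding eventually_sequentially by blast
  define D where "D = max 1 (ln (real N * (2 * ln (real N) + 3)))"
  define C where "C = max 16010 (2 * D\<^sup>2 + D)"
  have "\<bar>exponent_sum q a - weighted_log q a / ln (weighted_log q a)\<bar>
          \<le> C * weighted_log q a / (ln (weighted_log q a))\<^sup>2"
    if "exponent_profile q a" "1 < weighted_log q a" for q a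
  proof -
    interpret exponent_profile q a
      by (fact that(1))
    have nonneg: "0 \<le> weighted_log q a / (ln (weighted_log q a))\<^sup>2"
      using that(2) by simp
    have mono: "c * weighted_log q a / (ln (weighted_log q a))\<^sup>2
        \<le> C * weighted_log q a / (ln (weighted_log q a))\<^sup>2" if "c \<le> C" for c
      using mult_right_mono[OF that nonneg] by simp
    show ?thesis
    proof (cases "N \<le> q")
      case True
      then show ?thesis
        using quotient_estimate_large_q[OF N[OF True]] mono[of 16010] by (simp add: C_def)
    next
      case False
      then show ?thesis
        using quotient_estimate_bounded_q[of N] that(2) mono[of "2 * D\<^sup>2 + D"]
        by (force simp: C_def D_def)
    qed
  qed
  moreover have "0 < C"
    by (simp add: C_def)
  ultimately show ?thesis
    using that by blast
qed

theorem lemma3p15: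
  shows "\<exists>C>0. \<forall>n::nat. reduced n \<and> n \<ge> 3 \<longrightarrow>
    \<bar>real (bigOmega n) - ln (real n) / ln (ln (real n))\<bar>
      \<le> C * ln (real n) / (ln (ln (real n)))^2"
proof -
  obtain C where "0 < C" and C: "\<And>q a. exponent_profile q a \<Longrightarrow> 1 < weighted_log q a \<Longrightarrow>
      \<bar>exponent_sum q a - weighted_log q a / ln (weighted_log q a)\<bar>
        \<le> C * weighted_log q a / (ln (weighted_log q a))\<^sup>2"
    using exponent_profile_estimate by blast
  have "\<bar>real (bigOmega n) - ln (real n) / ln (ln (real n))\<bar> \<le> C * ln (real n) / (ln (ln (real n)))^2"
    if n: "reduced n" "3 \<le> n" for n
  proof -
    obtain q where "exponent_profile q (\<lambda>p. real (multiplicity p n))"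
      and "weighted_log q (\<lambda>p. real (multiplicity p n)) = ln (real n)"
      and "exponent_sum q (\<lambda>p. real (multiplicity p n)) = real (bigOmega n)"
      using reduced_exponent_profile[OF n(1)] by blast
    moreover have "1 < ln (real n)"
      using n(2) e_less_272 ln_less_cancel_iff[of "exp 1" "real n"] by simp
    ultimately show ?thesis
      using C by metis
  qed
  with \<open>0 < C\<close> show ?thesis
    by blast
qed

end
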